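(* In the semi-discrete heat setting described in the context, assume that the reference state $u$ satisfies the discrete non-degeneracy condition: for all $t>0$ and all $j\in\{1,\dots,N-1\}$, $\frac12u_{(2,j)}(t)-2u_{(1,j)}(t)\neq0$. Let $Z_d=u(T)$. Then there exist a neighborhood $\mathcal{V}(0)\subset C([0,T];W_h)$ of $0$ and a neighborhood $\mathcal{V}(Z_d)\subset\mathcal{F}(\mathring\Omega_h)$ of $Z_d$ such that for every $Z\in\mathcal{V}(Z_d)$ there exists $\varphi\in\mathcal{V}(0)$ with $u_\varphi(T)=Z$.
   Context: Let $h>0$, integers $M,N\ge2$, grid $\Omega_h=\{(ih,jh):0\le i\le M,0\le j\le N\}$ (discretizing the rectangle $[0,Mh]\times[0,Nh]$) with nodes indexed $(i,j)$, interior $\mathring\Omega_h=\{1\le i\le M-1,1\le j\le N-1\}$, $\Gamma^1=\{(1,j):1\le j\le N-1\}$; $\mathcal{F}(\mathring\Omega_h)$ is the space of real functions on $\mathring\Omega_h$, extended by $0$ on boundary nodes. For $j=1,\dots,N-1$, $V_j$ is the vector field equal to $(1,0)$ at boundary node $(0,j)$ and $0$ elsewhere, $W_h=\mathrm{span}(V_j)$. Perturbations are $\varphi(t)=\sum_{j=1}^{N-1}h\lambda_j(t)V_j$ with continuous bounded $\lambda_j$, $\sup_j\|\lambda_j\|_\infty<1/2$ (the boundary node $(0,jh)$ moves to $(h\lambda_j(t),jh)$). $A(\varphi)$ is the operator $[A(\varphi)\phi]_{(i,j)}=h^{-2}(4\phi_{(i,j)}-\phi_{(i+1,j)}-\phi_{(i-1,j)}-\phi_{(i,j+1)}-\phi_{(i,j-1)})$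 for $(i,j)\notin\Gamma^1$ and $[A(\varphi)\phi]_{(1,j)}=h^{-2}\big(2(1+\frac{1}{1+\lambda_j(t)})\phi_{(1,j)}-\frac{2}{2+\lambda_j(t)}\phi_{(2,j)}-\phi_{(1,j+1)}-\phi_{(1,j-1)}\big)$. Given a source $F:[0,\infty)\to\mathcal{F}(\mathring\Omega_h)$ (a discretization of the continuous source) and $u_0\in\mathcal{F}(\mathring\Omega_h)$, the perturbed state $u_\varphi\in C([0,T],\mathcal{F}(\mathring\Omega_h))$ solves $\partial_tu_\varphi+A(\varphi)u_\varphi=F$, $u_\varphi(0)=u_0$, and the reference state is $u=u_{\varphi=0}$. $T>0$ is fixed. *)

theory Defs
  imports "HOL-Analysis.Analysis"
begin

text \<open>Grid nodes are pairs (i,j) of naturals. A grid function is a map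
  nat \<times> nat \<Rightarrow> real; elements of F(interior) vanish off the interior nodes.\<close>

definition interior_node :: "nat \<Rightarrow> nat \<Rightarrow> nat \<times> nat \<Rightarrow> bool" where
  "interior_node M N p \<longleftrightarrow> 1 \<le> fst p \<and> fst p \<le> M - 1 \<and> 1 \<le> snd p \<and> snd p \<le> N - 1"

definition in_F :: "nat \<Rightarrow> nat \<Rightarrow> (nat \<times> nat \<Rightarrow> real) \<Rightarrow> bool" where
  "in_F M N f \<longleftrightarrow> (\<forall>p. \<not> interior_node M N p \<longrightarrow> f p = 0)"

text \<open>The operator A(phi) at a fixed time; lam j is the value lambda_j(t).
  Only its values at interior nodes are relevant.\<close>

definition Aop :: "real \<Rightarrow> (nat \<Rightarrow> real) \<Rightarrow> (nat \<times> nat \<Rightarrow> real) \<Rightarrow> nat \<times> nat \<Rightarrow> real" where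
  "Aop h lam \<phi> p = (let i = fst p; j = snd p in
     if i = 1 then
       (2 * (1 + 1 / (1 + lam j)) * \<phi> (1, j) - 2 / (2 + lam j) * \<phi> (2, j)
          - \<phi> (1, j + 1) - \<phi> (1, j - 1)) / h\<^sup>2
     else
       (4 * \<phi> (i, j) - \<phi> (i + 1, j) - \<phi> (i - 1, j) - \<phi> (i, j + 1) - \<phi> (i, j - 1)) / h\<^sup>2)"

definition is_sol ::
  "real \<Rightarrow> nat \<Rightarrow> nat \<Rightarrow> real set \<Rightarrow> (real \<Rightarrow> nat \<times> nat \<Rightarrow> real) \<Rightarrow> (nat \<times> nat \<Rightarrow> real)
     \<Rightarrow> (nat \<Rightarrow> real \<Rightarrow> real) \<Rightarrow> (real \<Rightarrow> nat \<times> nat \<Rightarrow> real) \<Rightarrow> bool" where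
  "is_sol h M N S F u0 lam v \<longleftrightarrow>
     v 0 = u0 \<and> (\<forall>t\<in>S. in_F M N (v t)) \<and>
     (\<forall>p. interior_node M N p \<longrightarrow> (\<forall>t\<in>S.
        ((\<lambda>s. v s p) has_real_derivative (F t p - Aop h (\<lambda>j. lam j t) (v t) p)) (at t within S)))"

text \<open>Admissible perturbations phi(t) = sum_j h lambda_j(t) V_j on [0,T]:
  lambda_j continuous (hence bounded) with sup_j ||lambda_j||_inf < 1/2.\<close>

definition admissible :: "nat \<Rightarrow> real \<Rightarrow> (nat \<Rightarrow> real \<Rightarrow> real) \<Rightarrow> bool" where
  "admissible N T lam \<longleftrightarrow>
     (\<forall>j\<in>{1..N-1}. continuous_on {0..T} (lam j)) \<and>
     (\<exists>c < 1/2. \<forall>j\<in>{1..N-1}. \<forall>t\<in>{0..T}. \<bar>lam j t\<bar> \<le> c)"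

end

theory Submission
  imports Defs "HOL-Computational_Algebra.Polynomial"
begin

text \<open>The perturbed state is sought as \<open>u + w\<close>, where the corrector \<open>w\<close> vanishes up to time
  \<open>c = T / 2\<close> and afterwards is polynomial in \<open>t - c\<close>. Its rows are computed backward from row
  \<open>M - 1\<close> by solving the interior equations of rows \<open>M - 1, \<dots>, 2\<close>, which involve no perturbation,
  for the row below; the Taylor coefficients of the top row then determine the values of all
  rows at time \<open>T\<close> triangularly, so every final state is reached, linearly in the target. The
  only equation left is that of row 1, which contains \<open>\<lambda>\<^sub>j(t)\<close>; it is a quadratic
  equation in \<open>\<lambda>\<^sub>j(t)\<close>, and the non-degeneracy of \<open>u\<close> makes it solvable with \<open>\<lambda>\<^sub>j(t)\<close> small and
  continuous as long as the target is close to \<open>u(T)\<close>. Uniqueness follows from an energy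
  estimate.\<close>

lemma higher_pderiv_diff:
  "(pderiv ^^ n) (p - q) = (pderiv ^^ n) p - (pderiv ^^ n) (q :: 'a::idom poly)"
  by (induction n arbitrary: p q) (simp_all del: funpow.simps add: funpow_Suc_right pderiv_diff)

lemma smult_sum_right: "smult c (sum f S) = (\<Sum>i\<in>S. smult c (f i :: 'a::comm_semiring_0 poly))"
  by (induction S rule: infinite_finite_induct) (simp_all add: smult_add_right)

lemma pderiv_linear_power_mult:
  "pderiv ([:-c,1:] ^ Suc n * g) = [:-c,1:] ^ n * (smult (of_nat (Suc n)) g + [:-c,1:] * pderiv g)"
  for c :: "'a::idom"
proof -
  have "pderiv [:-c,1:] = (1::'a poly)" by (simp add: pderiv_pCons)
  then have "pderiv ([:-c,1:] ^ Suc n * g)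
      = [:-c,1:] ^ Suc n * pderiv g + g * (smult (of_nat (Suc n)) ([:-c,1:] ^ n) * 1)"
    by (simp only: pderiv_mult pderiv_power_Suc)
  also have "\<dots> = [:-c,1:] ^ n * (smult (of_nat (Suc n)) g + [:-c,1:] * pderiv g)"
    by (simp only: power_Suc mult_smult_left mult_smult_right distrib_left mult_1_right
        mult_1_left ac_simps)
  finally show ?thesis .
qed

lemma poly_higher_pderiv_linear_power_mult:
  fixes c :: "'a::{idom,semiring_char_0}" and g :: "'a poly"
  shows "(q < n \<longrightarrow> poly ((pderiv ^^ q) ([:-c,1:] ^ n * g)) c = 0) \<and>
         (q = n \<longrightarrow> poly ((pderiv ^^ q) ([:-c,1:] ^ n * g)) c = fact n * poly g c)"
proof (induction n arbitrary: q g)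
  case 0
  then show ?case by simp
next
  case (Suc n)
  show ?case
  proof (cases q)
    case 0
    then show ?thesis by simp
  next
    case (Suc q')
    define G where "G = smult (of_nat (Suc n)) g + [:-c,1:] * pderiv g"
    have shift: "poly ((pderiv ^^ q) ([:-c,1:] ^ Suc n * g)) c
        = poly ((pderiv ^^ q') ([:-c,1:] ^ n * G)) c"
      using Suc by (simp only: funpow_Suc_right o_apply pderiv_linear_power_mult G_def)
    have "poly G c = of_nat (Suc n) * poly g c" by (simp add: G_def)
    then show ?thesis unfolding shift using Suc.IH[of q' G] Suc by (simp add: algebra_simps)
  qed
qed

lemma abs_sum_mult_le:
  fixes D a b :: "'a \<Rightarrow> real"
  assumes "\<forall>x\<in>I. \<bar>D x\<bar> \<le> \<epsilon>" "\<forall>x\<in>I. \<bar>a x\<bar> \<le> b x"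
  shows "\<bar>\<Sum>x\<in>I. D x * a x\<bar> \<le> \<epsilon> * (\<Sum>x\<in>I. b x)"
proof -
  have "\<bar>\<Sum>x\<in>I. D x * a x\<bar> \<le> (\<Sum>x\<in>I. \<bar>D x\<bar> * \<bar>a x\<bar>)"
    using sum_abs[of "\<lambda>x. D x * a x" I] by (simp add: abs_mult)
  also have "\<dots> \<le> (\<Sum>x\<in>I. \<epsilon> * b x)"
    using assms by (intro sum_mono mult_mono) auto
  finally show ?thesis by (simp add: sum_distrib_left)
qed

lemma abs_mult_le_of_squares:
  fixes a b E :: real
  assumes "a\<^sup>2 \<le> E" "b\<^sup>2 \<le> E"
  shows "\<bar>a * b\<bar> \<le> E"
proof -
  have "0 \<le> (\<bar>a\<bar> - \<bar>b\<bar>)\<^sup>2" by simp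
  then have "2 * \<bar>a * b\<bar> \<le> a\<^sup>2 + b\<^sup>2" by (simp add: power2_diff abs_mult)
  then show ?thesis using assms by linarith
qed

lemma gronwall_zero:
  fixes E E' :: "real \<Rightarrow> real"
  assumes "T \<ge> 0" "E 0 = 0" "\<And>t. t \<in> {0..T} \<Longrightarrow> E t \<ge> 0"
    and "\<And>t. t \<in> {0..T} \<Longrightarrow> (E has_real_derivative E' t) (at t within {0..T})"
    and "\<And>t. t \<in> {0..T} \<Longrightarrow> E' t \<le> \<kappa> * E t"
  shows "E T = 0"
proof -
  define G where "G t = E t * exp (- \<kappa> * t)" for t
  have G': "(G has_real_derivative (E' t - \<kappa> * E t) * exp (- \<kappa> * t)) (at t within {0..T})"
    if "t \<in> {0..T}" for t
    unfolding G_def using assms(4)[OF that] by (auto intro!: derivative_eq_intros simp: algebra_simps)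
  have "G T \<le> G 0"
  proof (rule DERIV_nonpos_imp_decreasing_open[OF assms(1)])
    fix t assume t: "0 < t" "t < T"
    then have "(G has_real_derivative (E' t - \<kappa> * E t) * exp (- \<kappa> * t)) (at t)"
      using G'[of t] at_within_Icc_at[OF t] by simp
    moreover have "(E' t - \<kappa> * E t) * exp (- \<kappa> * t) \<le> 0"
      using assms(5)[of t] t by (simp add: mult_nonpos_nonneg)
    ultimately show "\<exists>y. (G has_real_derivative y) (at t) \<and> y \<le> 0" by blast
  qed (use G' in \<open>rule DERIV_continuous_on\<close>)
  then have "E T * exp (- \<kappa> * T) \<le> 0" by (simp add: G_def assms(2))
  then show ?thesis using assms(1) assms(3)[of T] by (simp add: mult_le_0_iff)
qed

lemma continuous_on_compact_pos_bound:
  fixes g :: "'b \<Rightarrow> 'a::topological_space \<Rightarrow> real"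
  assumes "compact S" "finite J" "\<And>j. j \<in> J \<Longrightarrow> continuous_on S (g j)"
    and "\<And>j x. j \<in> J \<Longrightarrow> x \<in> S \<Longrightarrow> g j x > 0"
  obtains m where "m > 0" "\<And>j x. j \<in> J \<Longrightarrow> x \<in> S \<Longrightarrow> m \<le> g j x"
proof -
  have "\<exists>m>0. \<forall>x\<in>S. m \<le> g j x" if j: "j \<in> J" for j
  proof (cases "S = {}")
    case False
    then obtain x0 where "x0 \<in> S" "\<And>x. x \<in> S \<Longrightarrow> g j x0 \<le> g j x"
      using continuous_attains_inf[OF assms(1) _ assms(3)[OF j]] by blast
    then show ?thesis using assms(4)[OF j] by blast
  qed (auto intro: exI[of _ 1])
  then obtain m where m: "\<forall>j\<in>J. m j > 0 \<and> (\<forall>x\<in>S. m j \<le> g j x)"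
    using bchoice[of J "\<lambda>j m. m > 0 \<and> (\<forall>x\<in>S. m \<le> g j x)"] by blast
  have "Min (insert 1 (m ` J)) \<le> g j x" if "j \<in> J" "x \<in> S" for j x
  proof -
    have "Min (insert 1 (m ` J)) \<le> m j" using that assms(2) by (intro Min_le) auto
    then show ?thesis using m that by force
  qed
  moreover have "Min (insert 1 (m ` J)) > 0" using m assms(2) by simp
  ultimately show thesis using that by blast
qed

lemma continuous_on_compact_abs_bound:
  fixes g :: "'b \<Rightarrow> 'a::topological_space \<Rightarrow> real"
  assumes "compact S" "finite J" "\<And>j. j \<in> J \<Longrightarrow> continuous_on S (g j)"
  obtains B where "B \<ge> 0" "\<And>j x. j \<in> J \<Longrightarrow> x \<in> S \<Longrightarrow> \<bar>g j x\<bar> \<le> B"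
proof -
  have "continuous_on S (\<lambda>x. \<Sum>j\<in>J. \<bar>g j x\<bar>)" by (intro continuous_intros assms(3))
  then have "bounded ((\<lambda>x. \<Sum>j\<in>J. \<bar>g j x\<bar>) ` S)"
    by (rule compact_imp_bounded[OF compact_continuous_image[OF _ assms(1)]])
  then obtain B where B: "\<forall>y\<in>(\<lambda>x. \<Sum>j\<in>J. \<bar>g j x\<bar>) ` S. norm y \<le> B"
    unfolding bounded_iff by blast
  have "\<bar>g j x\<bar> \<le> B" if "j \<in> J" "x \<in> S" for j x
  proof -
    have "\<bar>g j x\<bar> \<le> (\<Sum>j\<in>J. \<bar>g j x\<bar>)" using that assms(2) by (intro member_le_sum) auto
    moreover have "norm (\<Sum>j\<in>J. \<bar>g j x\<bar>) \<le> B" using B that(2) by blast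
    ultimately show ?thesis by simp
  qed
  then show thesis using that[of "max B 0"] by (meson max.cobounded1 max.cobounded2 order.trans)
qed

definition delay :: "real \<Rightarrow> real \<Rightarrow> real" where
  "delay c t = max 0 (t - c)"

lemma has_real_derivative_poly_delay:
  assumes "coeff P 1 = 0"
  shows "((\<lambda>t. poly P (delay c t)) has_real_derivative poly (pderiv P) (delay c t)) (at t)"
proof -
  have d0: "poly (pderiv P) 0 = 0" using assms by (simp add: poly_0_coeff_0 coeff_pderiv)
  have shifted: "((\<lambda>x. poly P (x - c)) has_real_derivative poly (pderiv P) (y - c)) (at y within S)"
    for y S
    using DERIV_chain2[OF poly_DERIV, of "\<lambda>x. x - c" 1] by (auto intro!: derivative_eq_intros)
  consider "t > c" | "t < c" | "t = c" by linarith
  then show ?thesis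
  proof cases
    case 1
    have "((\<lambda>x. poly P (x - c)) has_real_derivative poly (pderiv P) (t - c)) (at t)"
      using shifted by simp
    then have "((\<lambda>x. poly P (delay c x)) has_real_derivative poly (pderiv P) (t - c)) (at t)"
      by (rule has_field_derivative_transform_within_open[of _ _ _ "{c<..}"])
         (use 1 in \<open>auto simp: delay_def\<close>)
    then show ?thesis using 1 by (simp add: delay_def)
  next
    case 2
    have "((\<lambda>x. poly P (delay c x)) has_real_derivative 0) (at t)"
      by (rule has_field_derivative_transform_within_open[of "\<lambda>x. poly P 0" _ _ "{..<c}"])
         (use 2 in \<open>auto simp: delay_def\<close>)
    then show ?thesis using 2 d0 by (simp add: delay_def)
  next
    case 3
    have "((\<lambda>x. poly P (delay c x)) has_real_derivative 0) (at c within {c..})"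
      by (rule has_field_derivative_transform_within[OF shifted[of c "{c..}", simplified d0 diff_self],
            of 1])
         (auto simp: delay_def)
    moreover have "((\<lambda>x. poly P (delay c x)) has_real_derivative 0) (at c within {..c})"
      by (rule has_field_derivative_transform_within[of "\<lambda>x. poly P 0" _ _ _ 1])
         (auto simp: delay_def)
    ultimately have "((\<lambda>x. poly P (delay c x)) has_real_derivative 0) (at c within ({..c} \<union> {c..}))"
      unfolding has_field_derivative_iff Lim_within_Un by blast
    moreover have "{..c} \<union> {c..} = (UNIV :: real set)" by auto
    ultimately show ?thesis using 3 d0 by (simp add: delay_def)
  qed
qed

section \<open>The semi-discrete equation\<close>

lemma interior_node_Pair [simp]:
  "interior_node M N (i, j) \<longleftrightarrow> 1 \<le> i \<and> i \<le> M - 1 \<and> 1 \<le> j \<and> j \<le> N - 1"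
  by (simp add: interior_node_def)

lemma in_F_outside: "in_F M N f \<Longrightarrow> \<not> interior_node M N p \<Longrightarrow> f p = 0"
  unfolding in_F_def by blast

lemma is_solD:
  assumes "is_sol h M N S F u0 lam v"
  shows "v 0 = u0" "t \<in> S \<Longrightarrow> in_F M N (v t)"
    "interior_node M N p \<Longrightarrow> t \<in> S \<Longrightarrow>
     ((\<lambda>s. v s p) has_real_derivative (F t p - Aop h (\<lambda>j. lam j t) (v t) p)) (at t within S)"
  using assms unfolding is_sol_def by blast+

lemma is_sol_continuous_on:
  assumes "is_sol h M N S F u0 lam v"
  shows "continuous_on S (\<lambda>t. v t p)"
proof (cases "interior_node M N p")
  case True
  then show ?thesis using is_solD(3)[OF assms True] by (intro DERIV_continuous_on) auto
next
  case False
  then have "\<forall>t\<in>S. v t p = 0" using is_solD(2)[OF assms] in_F_outside by blast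
  then show ?thesis using continuous_on_cong continuous_on_const by fastforce
qed

lemma Aop_diff: "Aop h l (\<lambda>q. f q - g q) p = Aop h l f p - Aop h l g p"
  unfolding Aop_def Let_def by (simp add: divide_inverse algebra_simps)

lemma Aop_add_interior:
  "i \<noteq> 1 \<Longrightarrow> Aop h l (\<lambda>q. f q + g q) (i, j) = Aop h l' f (i, j) + Aop h l'' g (i, j)"
  by (simp add: Aop_def add_divide_distrib [symmetric] algebra_simps)

lemma Aop_boundary_row:
  assumes "h > 0"
    and "2 * (1 + 1 / (1 + l j)) * (u (1, j) + w (1, j)) - 2 / (2 + l j) * (u (2, j) + w (2, j))
      = r + 4 * (u (1, j) + w (1, j)) - (u (2, j) + w (2, j))"
    and "r = w (1, j + 1) + w (1, j - 1) - h\<^sup>2 * w' - 4 * w (1, j) + w (2, j)"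
  shows "Aop h l (\<lambda>q. u q + w q) (1, j) = Aop h (\<lambda>j. 0) u (1, j) - w'"
  using assms by (simp add: Aop_def field_simps)

lemma abs_mult_Aop_le:
  fixes d :: "nat \<times> nat \<Rightarrow> real"
  assumes "h > 0" "\<bar>l (snd p)\<bar> \<le> 1/4" "\<And>q. (d q)\<^sup>2 \<le> E"
  shows "\<bar>d p * Aop h l d p\<bar> \<le> 10 / h\<^sup>2 * E"
proof -
  obtain i j where p: "p = (i, j)" by fastforce
  have "0 \<le> E" using assms(3) by (meson order.trans zero_le_power2)
  have prod: "\<bar>d p * d q\<bar> \<le> E" for q using abs_mult_le_of_squares assms(3) by blast
  have "\<bar>d p * (Aop h l d p * h\<^sup>2)\<bar> \<le> 10 * E"
  proof (cases "i = 1")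
    case True
    define \<alpha> \<beta> where "\<alpha> = 2 * (1 + 1 / (1 + l j))" and "\<beta> = 2 / (2 + l j)"
    have "\<bar>l j\<bar> \<le> 1/4" using assms(2) p by simp
    then have "0 < 1 / (1 + l j)" "1 / (1 + l j) \<le> 4/3" "0 < 2 / (2 + l j)" "2 / (2 + l j) \<le> 2"
      by (auto simp: field_simps abs_le_iff)
    then have "\<bar>\<alpha>\<bar> \<le> 5" "\<bar>\<beta>\<bar> \<le> 2" unfolding \<alpha>_def \<beta>_def by auto
    then have "\<bar>\<alpha> * (d p * d (1, j))\<bar> \<le> 5 * E" "\<bar>\<beta> * (d p * d (2, j))\<bar> \<le> 2 * E"
      using prod \<open>0 \<le> E\<close> by (simp_all add: abs_mult mult_mono)
    moreover have "d p * (Aop h l d p * h\<^sup>2) = \<alpha> * (d p * d (1, j)) - \<beta> * (d p * d (2, j))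
        - d p * d (1, j + 1) - d p * d (1, j - 1)"
      using True assms(1) p unfolding Aop_def Let_def \<alpha>_def \<beta>_def by (simp add: field_simps)
    ultimately show ?thesis using prod[of "(1, j + 1)"] prod[of "(1, j - 1)"] by (simp add: abs_le_iff)
  next
    case False
    then have "d p * (Aop h l d p * h\<^sup>2) = 4 * (d p * d (i, j)) - d p * d (i + 1, j)
        - d p * d (i - 1, j) - d p * d (i, j + 1) - d p * d (i, j - 1)"
      using assms(1) p unfolding Aop_def Let_def by (simp add: field_simps)
    then show ?thesis
      using prod[of "(i, j)"] prod[of "(i + 1, j)"] prod[of "(i - 1, j)"] prod[of "(i, j + 1)"]
        prod[of "(i, j - 1)"] by (simp add: abs_le_iff)
  qed
  then show ?thesis using assms(1) by (simp add: abs_mult field_simps)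
qed

lemma is_sol_add:
  assumes "is_sol h M N {0..} F u0 (\<lambda>j t. 0) u"
    and "\<And>t. t \<in> {0..T} \<Longrightarrow> in_F M N (w t)" and "w 0 = (\<lambda>p. 0)"
    and "\<And>p t. interior_node M N p \<Longrightarrow> t \<in> {0..T} \<Longrightarrow> ((\<lambda>s. w s p) has_real_derivative
       Aop h (\<lambda>j. 0) (u t) p - Aop h (\<lambda>j. lam j t) (\<lambda>q. u t q + w t q) p) (at t within {0..T})"
  shows "is_sol h M N {0..T} F u0 lam (\<lambda>t q. u t q + w t q)"
  unfolding is_sol_def
proof (intro conjI allI impI ballI)
  show "(\<lambda>q. u 0 q + w 0 q) = u0" using is_solD(1)[OF assms(1)] assms(3) by simp
next
  fix t :: real assume "t \<in> {0..T}"
  then show "in_F M N (\<lambda>q. u t q + w t q)"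
    using is_solD(2)[OF assms(1)] assms(2) by (simp add: in_F_def)
next
  fix p and t :: real assume p: "interior_node M N p" and t: "t \<in> {0..T}"
  have "((\<lambda>s. u s p) has_real_derivative F t p - Aop h (\<lambda>j. 0) (u t) p) (at t within {0..T})"
    using is_solD(3)[OF assms(1) p, of t] t by (auto intro: has_field_derivative_subset)
  from DERIV_add[OF this assms(4)[OF p t]]
  show "((\<lambda>s. u s p + w s p) has_real_derivative
      F t p - Aop h (\<lambda>j. lam j t) (\<lambda>q. u t q + w t q) p) (at t within {0..T})"
    by simp
qed

lemma has_real_derivative_is_sol_diff:
  assumes "is_sol h M N S F u0 lam v" "is_sol h M N S F u0' lam v'" "t \<in> S" "interior_node M N p"
  shows "((\<lambda>s. v s p - v' s p) has_real_derivative - Aop h (\<lambda>j. lam j t) (\<lambda>q. v t q - v' t q) p)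
    (at t within S)"
  using DERIV_diff[OF is_solD(3)[OF assms(1,4,3)] is_solD(3)[OF assms(2,4,3)]]
    Aop_diff[of h "\<lambda>j. lam j t" "v t" "v' t" p] by simp

text \<open>Energy estimate with Gronwall's inequality; the bound on \<open>\<lambda>\<close> keeps the coefficients of
  the boundary row bounded.\<close>

lemma is_sol_unique_at:
  fixes h T :: real
  assumes "h > 0" "T \<ge> 0" "\<forall>j\<in>{1..N - 1}. \<forall>t\<in>{0..T}. \<bar>lam j t\<bar> \<le> 1/4"
    and v1: "is_sol h M N {0..T} F u0 lam v1" and v2: "is_sol h M N {0..T} F u0 lam v2"
  shows "v1 T = v2 T"
proof -
  define I where "I = {1..M - 1} \<times> {1..N - 1}"
  have "finite I" and I: "interior_node M N p \<longleftrightarrow> p \<in> I" for p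
    by (auto simp: I_def interior_node_def mem_Times_iff)
  define d where "d t = (\<lambda>p. v2 t p - v1 t p)" for t
  define E where "E t = (\<Sum>p\<in>I. (d t p)\<^sup>2)" for t
  define E' where "E' t = (\<Sum>p\<in>I. 2 * d t p * (- Aop h (\<lambda>j. lam j t) (d t) p))" for t
  have d_outside: "d t p = 0" if "t \<in> {0..T}" "p \<notin> I" for t p
    using is_solD(2)[OF v1 that(1)] is_solD(2)[OF v2 that(1)] that(2) I
    by (simp add: d_def in_F_outside)
  have d': "((\<lambda>s. d s p) has_real_derivative - Aop h (\<lambda>j. lam j t) (d t) p) (at t within {0..T})"
    if "t \<in> {0..T}" "p \<in> I" for t p
    using has_real_derivative_is_sol_diff[OF v2 v1 that(1)] that(2) I by (simp add: d_def)
  have E_deriv: "(E has_real_derivative E' t) (at t within {0..T})" if "t \<in> {0..T}" for t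
    unfolding E_def E'_def
    by (rule DERIV_sum) (use d'[OF that] in \<open>auto intro!: derivative_eq_intros\<close>)
  have square_le: "(d t q)\<^sup>2 \<le> E t" if "t \<in> {0..T}" for t q
  proof (cases "q \<in> I")
    case True
    then show ?thesis unfolding E_def
      by (rule member_le_sum[where f = "\<lambda>p. (d t p)\<^sup>2"]) (simp_all add: \<open>finite I\<close>)
  next
    case False
    then show ?thesis using d_outside[OF that False] by (simp add: E_def sum_nonneg)
  qed
  have E'_le: "E' t \<le> (real (card I) * (20 / h\<^sup>2)) * E t" if "t \<in> {0..T}" for t
  proof -
    have "E' t \<le> (\<Sum>p\<in>I. 2 * (10 / h\<^sup>2 * E t))"
      unfolding E'_def
    proof (rule sum_mono)
      fix p assume "p \<in> I"
      then have "\<bar>lam (snd p) t\<bar> \<le> 1/4" using assms(3) that by (auto simp: I_def)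
      then have "\<bar>d t p * Aop h (\<lambda>j. lam j t) (d t) p\<bar> \<le> 10 / h\<^sup>2 * E t"
        using abs_mult_Aop_le[OF assms(1), of "\<lambda>j. lam j t" p "d t"] square_le[OF that] by simp
      then show "2 * d t p * - Aop h (\<lambda>j. lam j t) (d t) p \<le> 2 * (10 / h\<^sup>2 * E t)"
        by (simp add: abs_le_iff)
    qed
    then show ?thesis by simp
  qed
  have "E 0 = 0" using is_solD(1)[OF v1] is_solD(1)[OF v2] by (simp add: E_def d_def)
  moreover have "E t \<ge> 0" for t unfolding E_def by (simp add: sum_nonneg)
  ultimately have "E T = 0" by (intro gronwall_zero[OF assms(2) _ _ E_deriv E'_le])
  then have "d T p = 0" for p
    using square_le[of T p] assms(2) by simp
  then show ?thesis by (auto simp: d_def fun_eq_iff)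
qed

section \<open>The backward sweep\<close>

text \<open>Row \<open>M - 1\<close> of the corrector as a polynomial in the delayed time \<open>s\<close>; its coefficients
  \<open>Y l j\<close> in powers of \<open>s - c\<close> are the free parameters of the construction.\<close>

definition top_row :: "nat \<Rightarrow> nat \<Rightarrow> nat \<Rightarrow> real \<Rightarrow> (nat \<Rightarrow> nat \<Rightarrow> real) \<Rightarrow> nat \<Rightarrow> real poly" where
  "top_row N K L c Y j = (if 1 \<le> j \<and> j \<le> N - 1
     then (\<Sum>l<L. smult (Y l j) (monom 1 K * [:-c,1:] ^ l)) else 0)"

text \<open>Row \<open>i - 1\<close>, obtained by solving the source-free interior equation of row \<open>i\<close>, from
  row \<open>i\<close> (argument \<open>a\<close>) and row \<open>i + 1\<close> (argument \<open>b\<close>). Accordingly \<open>sweep h N a m\<close> is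
  the pair of rows \<open>M - 1 - m\<close> and \<open>M - m\<close> when \<open>a\<close> is row \<open>M - 1\<close>; row \<open>M\<close> lies on the
  boundary and vanishes.\<close>

definition sweep_step ::
  "real \<Rightarrow> nat \<Rightarrow> (nat \<Rightarrow> real poly) \<Rightarrow> (nat \<Rightarrow> real poly) \<Rightarrow> nat \<Rightarrow> real poly" where
  "sweep_step h N a b j = (if 1 \<le> j \<and> j \<le> N - 1
     then smult (h\<^sup>2) (pderiv (a j)) + smult 4 (a j) - b j - a (j + 1) - a (j - 1) else 0)"

primrec sweep ::
  "real \<Rightarrow> nat \<Rightarrow> (nat \<Rightarrow> real poly) \<Rightarrow> nat \<Rightarrow> (nat \<Rightarrow> real poly) \<times> (nat \<Rightarrow> real poly)" where
  "sweep h N a 0 = (a, \<lambda>j. 0)"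
| "sweep h N a (Suc m) =
     (sweep_step h N (fst (sweep h N a m)) (snd (sweep h N a m)), fst (sweep h N a m))"

lemma sweep_linear:
  "sweep h N (\<lambda>j. smult \<alpha> (a j) + smult \<beta> (b j)) m =
   ((\<lambda>j. smult \<alpha> (fst (sweep h N a m) j) + smult \<beta> (fst (sweep h N b m) j)),
    (\<lambda>j. smult \<alpha> (snd (sweep h N a m) j) + smult \<beta> (snd (sweep h N b m) j)))"
proof (induction m)
  case 0
  then show ?case by simp
next
  case (Suc m)
  show ?case
    by (simp add: Suc sweep_step_def pderiv_add pderiv_smult smult_add_right smult_diff_right
        smult_smult fun_eq_iff)
       (simp add: algebra_simps smult_add_right smult_diff_right smult_smult)
qed

lemma sweep_zero: "sweep h N (\<lambda>j. 0) m = (\<lambda>j. 0, \<lambda>j. 0)"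
  by (induction m) (simp_all add: sweep_step_def fun_eq_iff)

lemma sweep_sum:
  assumes "finite I"
  shows "sweep h N (\<lambda>j. \<Sum>x\<in>I. smult (D x) (a x j)) m =
   ((\<lambda>j. \<Sum>x\<in>I. smult (D x) (fst (sweep h N (a x) m) j)),
    (\<lambda>j. \<Sum>x\<in>I. smult (D x) (snd (sweep h N (a x) m) j)))"
  using assms
proof (induction I rule: finite_induct)
  case empty
  then show ?case by (simp add: sweep_zero)
next
  case (insert x I)
  have "sweep h N (\<lambda>j. \<Sum>x\<in>insert x I. smult (D x) (a x j)) m
      = sweep h N (\<lambda>j. smult 1 (\<Sum>x\<in>I. smult (D x) (a x j)) + smult (D x) (a x j)) m"
    using insert by (simp add: add.commute)
  also have "\<dots> = ((\<lambda>j. smult 1 (fst (sweep h N (\<lambda>j. \<Sum>x\<in>I. smult (D x) (a x j)) m) j)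
        + smult (D x) (fst (sweep h N (a x) m) j)),
      (\<lambda>j. smult 1 (snd (sweep h N (\<lambda>j. \<Sum>x\<in>I. smult (D x) (a x j)) m) j)
        + smult (D x) (snd (sweep h N (a x) m) j)))"
    by (rule sweep_linear)
  finally show ?case using insert by (simp add: add.commute)
qed

lemma sweep_outside:
  assumes "\<not> (1 \<le> j \<and> j \<le> N - 1)"
  shows "fst (sweep h N (top_row N K L c Y) m) j = 0 \<and> snd (sweep h N (top_row N K L c Y) m) j = 0"
  using assms by (induction m) (auto simp: top_row_def sweep_step_def)

lemma top_row_linear:
  "top_row N K L c (\<lambda>l j. \<alpha> * Y l j + \<beta> * Y' l j) j
     = smult \<alpha> (top_row N K L c Y j) + smult \<beta> (top_row N K L c Y' j)"
  by (simp add: top_row_def smult_add_left sum.distrib smult_sum_right smult_smult)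

lemma top_row_sum:
  "top_row N K L c (\<lambda>l j. \<Sum>x\<in>I. D x * Y x l j) j = (\<Sum>x\<in>I. smult (D x) (top_row N K L c (Y x) j))"
proof -
  have "(\<Sum>l<L. smult (\<Sum>x\<in>I. D x * Y x l j) (monom 1 K * [:- c, 1:] ^ l))
      = (\<Sum>x\<in>I. smult (D x) (\<Sum>l<L. smult (Y x l j) (monom 1 K * [:- c, 1:] ^ l)))"
    by (simp add: smult_sum smult_sum_right smult_smult sum.swap[of _ I])
  then show ?thesis unfolding top_row_def by (cases "1 \<le> j \<and> j \<le> N - 1") auto
qed

lemma top_row_factor:
  assumes "n < L" "\<forall>l<n. \<forall>j. Y l j = 0" "1 \<le> j" "j \<le> N - 1"
  shows "\<exists>G. top_row N K L c Y j = [:-c,1:] ^ n * G \<and> poly G c = c ^ K * Y n j"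
proof -
  define G where "G = (\<Sum>l<L. smult (Y l j) (monom 1 K * [:-c,1:] ^ (l - n)))"
  have "smult (Y l j) (monom 1 K * [:-c,1:] ^ l)
      = [:-c,1:] ^ n * smult (Y l j) (monom 1 K * [:-c,1:] ^ (l - n))" for l
  proof (cases "l < n")
    case False
    then have "[:-c,1:] ^ l = [:-c,1:] ^ n * [:-c,1:] ^ (l - n)" by (simp flip: power_add)
    then show ?thesis by (simp add: algebra_simps)
  qed (use assms(2) in simp)
  then have "top_row N K L c Y j = [:-c,1:] ^ n * G"
    using assms(3,4) unfolding top_row_def G_def by (simp add: sum_distrib_left)
  moreover have "poly G c = (\<Sum>l<L. if l = n then c ^ K * Y n j else 0)"
    unfolding G_def poly_sum using assms(2)
    by (intro sum.cong refl) (auto simp: poly_monom not_less)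
  ultimately show ?thesis using assms(1) by simp
qed

lemma higher_pderiv_sweep_step:
  assumes "1 \<le> j" "j \<le> N - 1"
  shows "(pderiv ^^ q) (sweep_step h N a b j)
    = smult (h\<^sup>2) ((pderiv ^^ Suc q) (a j)) + smult 4 ((pderiv ^^ q) (a j))
      - (pderiv ^^ q) (b j) - (pderiv ^^ q) (a (j + 1)) - (pderiv ^^ q) (a (j - 1))"
  using assms unfolding sweep_step_def
  by (simp del: funpow.simps add: higher_pderiv_diff higher_pderiv_add higher_pderiv_smult
      funpow_Suc_right)

text \<open>Each sweep step trades one time derivative for one row, so the Taylor data of the top
  row at \<open>s = c\<close> are passed down triangularly.\<close>

lemma poly_higher_pderiv_sweep:
  assumes "n < L" "\<forall>l<n. \<forall>j. Y l j = 0"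
  shows "(\<forall>q j. q + m < n \<longrightarrow> poly ((pderiv ^^ q) (fst (sweep h N (top_row N K L c Y) m) j)) c = 0) \<and>
    (\<forall>q j. q + m = n \<longrightarrow> poly ((pderiv ^^ q) (fst (sweep h N (top_row N K L c Y) m) j)) c
       = h ^ (2 * m) * fact n * c ^ K * (if 1 \<le> j \<and> j \<le> N - 1 then Y n j else 0)) \<and>
    (\<forall>q j. q + m \<le> n \<longrightarrow> poly ((pderiv ^^ q) (snd (sweep h N (top_row N K L c Y) m) j)) c = 0)"
proof (induction m)
  case 0
  have "poly ((pderiv ^^ q) (top_row N K L c Y j)) c =
      (if q < n then 0 else fact n * c ^ K * (if 1 \<le> j \<and> j \<le> N - 1 then Y n j else 0))"
    if "q \<le> n" for q j
  proof (cases "1 \<le> j \<and> j \<le> N - 1")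
    case True
    then obtain G where "top_row N K L c Y j = [:-c,1:] ^ n * G" "poly G c = c ^ K * Y n j"
      using top_row_factor[OF assms] by blast
    then show ?thesis using poly_higher_pderiv_linear_power_mult[of q n c G] that True by auto
  qed (auto simp add: top_row_def)
  then show ?case by auto
next
  case (Suc m)
  have "poly ((pderiv ^^ q) (fst (sweep h N (top_row N K L c Y) (Suc m)) j)) c
      = (if q + Suc m < n then 0
         else h ^ (2 * Suc m) * fact n * c ^ K * (if 1 \<le> j \<and> j \<le> N - 1 then Y n j else 0))"
    if "q + Suc m \<le> n" for q j
  proof (cases "1 \<le> j \<and> j \<le> N - 1")
    case True
    have "Suc q + m \<le> n" "q + m < n" using that by auto
    then show ?thesis using True Suc
      by (auto simp del: funpow.simps simp add: higher_pderiv_sweep_step power_add power2_eq_square)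
  qed (auto simp add: sweep_step_def)
  then show ?case using Suc by auto
qed

lemma sweep_values_surj:
  assumes "h \<noteq> 0" "c \<noteq> 0"
  shows "n \<le> L \<Longrightarrow> \<exists>Y. (\<forall>l j. n \<le> l \<longrightarrow> Y l j = 0) \<and>
     (\<forall>m<n. \<forall>j. 1 \<le> j \<and> j \<le> N - 1 \<longrightarrow> poly (fst (sweep h N (top_row N K L c Y) m) j) c = D m j)"
proof (induction n)
  case 0
  then show ?case by (intro exI[of _ "\<lambda>l j. 0"]) simp
next
  case (Suc n)
  then obtain Y where Y0: "\<forall>l j. n \<le> l \<longrightarrow> Y l j = 0"
    and Y1: "\<forall>m<n. \<forall>j. 1 \<le> j \<and> j \<le> N - 1 \<longrightarrow> poly (fst (sweep h N (top_row N K L c Y) m) j) c = D m j"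
    by auto
  define \<kappa> where "\<kappa> = h ^ (2 * n) * fact n * c ^ K"
  have "\<kappa> \<noteq> 0" using assms unfolding \<kappa>_def by simp
  define E where "E l j = (if l = n then (D n j - poly (fst (sweep h N (top_row N K L c Y) n) j) c) / \<kappa>
    else 0)" for l j
  define Y' where "Y' l j = 1 * Y l j + 1 * E l j" for l j
  have top: "top_row N K L c Y' = (\<lambda>j. smult 1 (top_row N K L c Y j) + smult 1 (top_row N K L c E j))"
    unfolding Y'_def by (rule ext, rule top_row_linear)
  have sum: "poly (fst (sweep h N (top_row N K L c Y') m) j) c
      = poly (fst (sweep h N (top_row N K L c Y) m) j) c + poly (fst (sweep h N (top_row N K L c E) m) j) c"
    for m j
    unfolding top sweep_linear by simp
  have "n < L" "\<forall>l<n. \<forall>j. E l j = 0" using Suc by (auto simp: E_def)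
  note E = poly_higher_pderiv_sweep[OF this, of _ h N K c, THEN conjunct1, rule_format, of 0]
    poly_higher_pderiv_sweep[OF this, of _ h N K c, THEN conjunct2, THEN conjunct1, rule_format, of 0]
  show ?case
  proof (intro exI[of _ Y'] conjI allI impI)
    fix l j assume "Suc n \<le> l" then show "Y' l j = 0" using Y0 unfolding Y'_def E_def by simp
  next
    fix m j assume "m < Suc n" and j: "1 \<le> j \<and> j \<le> N - 1"
    then consider "m < n" | "m = n" by linarith
    then show "poly (fst (sweep h N (top_row N K L c Y') m) j) c = D m j"
      by cases (use Y1 j E \<open>\<kappa> \<noteq> 0\<close> in \<open>auto simp: sum E_def \<kappa>_def\<close>)
  qed
qed

lemma sweep_low_coeffs:
  "(\<forall>k j. k + m < K \<longrightarrow> coeff (fst (sweep h N (top_row N K L c Y) m) j) k = 0) \<and>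
   (\<forall>k j. k + m \<le> K \<longrightarrow> coeff (snd (sweep h N (top_row N K L c Y) m) j) k = 0)"
proof (induction m)
  case 0
  show ?case by (simp add: top_row_def coeff_sum coeff_monom_mult)
next
  case (Suc m)
  then show ?case by (auto simp add: sweep_step_def coeff_pderiv)
qed

section \<open>The corrector\<close>

definition corrector_row ::
  "real \<Rightarrow> nat \<Rightarrow> nat \<Rightarrow> real \<Rightarrow> (nat \<Rightarrow> nat \<Rightarrow> real) \<Rightarrow> nat \<Rightarrow> nat \<Rightarrow> real poly" where
  "corrector_row h M N c Y i = (if 1 \<le> i \<and> i \<le> M - 1
     then fst (sweep h N (top_row N M (M - 1) c Y) (M - 1 - i)) else (\<lambda>j. 0))"

definition corrector ::
  "real \<Rightarrow> nat \<Rightarrow> nat \<Rightarrow> real \<Rightarrow> (nat \<Rightarrow> nat \<Rightarrow> real) \<Rightarrow> real \<Rightarrow> nat \<times> nat \<Rightarrow> real" where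
  "corrector h M N c Y t = (\<lambda>(i, j). poly (corrector_row h M N c Y i j) (delay c t))"

definition corrector_rate ::
  "real \<Rightarrow> nat \<Rightarrow> nat \<Rightarrow> real \<Rightarrow> (nat \<Rightarrow> nat \<Rightarrow> real) \<Rightarrow> real \<Rightarrow> nat \<times> nat \<Rightarrow> real" where
  "corrector_rate h M N c Y t = (\<lambda>(i, j). poly (pderiv (corrector_row h M N c Y i j)) (delay c t))"

lemma corrector_row_outside: "\<not> (1 \<le> j \<and> j \<le> N - 1) \<Longrightarrow> corrector_row h M N c Y i j = 0"
  using sweep_outside by (simp add: corrector_row_def)

lemma corrector_row_low_coeffs: "k \<le> 1 \<Longrightarrow> coeff (corrector_row h M N c Y i j) k = 0"
  using sweep_low_coeffs[of "M - 1 - i" M h N "M - 1" c Y, THEN conjunct1]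
  by (auto simp: corrector_row_def)

lemma corrector_row_recurrence:
  assumes "2 \<le> i" "i \<le> M - 1" "1 \<le> j" "j \<le> N - 1"
  shows "corrector_row h M N c Y (i - 1) j = smult (h\<^sup>2) (pderiv (corrector_row h M N c Y i j))
    + smult 4 (corrector_row h M N c Y i j) - corrector_row h M N c Y (i + 1) j
    - corrector_row h M N c Y i (j + 1) - corrector_row h M N c Y i (j - 1)"
proof -
  let ?S = "sweep h N (top_row N M (M - 1) c Y)"
  have row_i: "fst (?S (M - 1 - i)) = corrector_row h M N c Y i"
    using assms by (simp add: corrector_row_def)
  have row_succ: "snd (?S (M - 1 - i)) = corrector_row h M N c Y (i + 1)"
  proof (cases "i = M - 1")
    case False
    then have "M - 1 - i = Suc (M - 1 - (i + 1))" using assms by linarith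
    then show ?thesis using assms False by (simp add: corrector_row_def)
  qed (simp add: corrector_row_def fun_eq_iff)
  have "M - 1 - (i - 1) = Suc (M - 1 - i)" "1 \<le> i - 1 \<and> i - 1 \<le> M - 1" using assms by linarith+
  then have "corrector_row h M N c Y (i - 1) = fst (?S (M - 1 - (i - 1)))"
    unfolding corrector_row_def by simp
  also have "\<dots> = fst (?S (Suc (M - 1 - i)))" by (simp only: \<open>M - 1 - (i - 1) = Suc (M - 1 - i)\<close>)
  also have "\<dots> = sweep_step h N (corrector_row h M N c Y i) (corrector_row h M N c Y (i + 1))"
    by (simp only: sweep.simps fst_conv row_i row_succ)
  finally show ?thesis using assms by (simp add: sweep_step_def)
qed

lemma corrector_row_sum:
  assumes "finite I"
  shows "corrector_row h M N c (\<lambda>l j. \<Sum>x\<in>I. D x * Y x l j) i j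
    = (\<Sum>x\<in>I. smult (D x) (corrector_row h M N c (Y x) i j))"
proof -
  have "top_row N M (M - 1) c (\<lambda>l j. \<Sum>x\<in>I. D x * Y x l j)
      = (\<lambda>j. \<Sum>x\<in>I. smult (D x) (top_row N M (M - 1) c (Y x) j))"
    by (rule ext, rule top_row_sum)
  then show ?thesis by (auto simp: corrector_row_def sweep_sum[OF assms])
qed

lemma corrector_sum:
  "finite I \<Longrightarrow> corrector h M N c (\<lambda>l j. \<Sum>x\<in>I. D x * Y x l j) t p
    = (\<Sum>x\<in>I. D x * corrector h M N c (Y x) t p)"
  by (cases p) (simp add: corrector_def corrector_row_sum poly_sum)

lemma corrector_rate_sum:
  "finite I \<Longrightarrow> corrector_rate h M N c (\<lambda>l j. \<Sum>x\<in>I. D x * Y x l j) t p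
    = (\<Sum>x\<in>I. D x * corrector_rate h M N c (Y x) t p)"
  by (cases p) (simp add: corrector_rate_def corrector_row_sum higher_pderiv_sum[of 1, simplified]
      pderiv_smult poly_sum)

lemma corrector_in_F: "in_F M N (corrector h M N c Y t)"
  unfolding in_F_def
proof (intro allI impI)
  fix p :: "nat \<times> nat" assume "\<not> interior_node M N p"
  moreover obtain i j where p: "p = (i, j)" by fastforce
  ultimately have "corrector_row h M N c Y i j = 0"
  proof (cases "1 \<le> i \<and> i \<le> M - 1")
    case True
    then show ?thesis using \<open>\<not> interior_node M N p\<close> p by (intro corrector_row_outside) simp
  qed (auto simp: corrector_row_def)
  then show "corrector h M N c Y t p = 0" by (simp add: corrector_def p)
qed

lemma corrector_before_delay:
  assumes "t \<le> c"
  shows "corrector h M N c Y t p = 0" "corrector_rate h M N c Y t p = 0"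
  using corrector_row_low_coeffs[of 0] corrector_row_low_coeffs[of 1] assms
  by (auto simp: corrector_def corrector_rate_def delay_def poly_0_coeff_0 coeff_pderiv split: prod.split)

lemma has_real_derivative_corrector:
  "((\<lambda>t. corrector h M N c Y t p) has_real_derivative corrector_rate h M N c Y t p) (at t)"
  using has_real_derivative_poly_delay[OF corrector_row_low_coeffs[of 1]]
  by (simp add: corrector_def corrector_rate_def split: prod.split)

lemma continuous_on_corrector: "continuous_on S (\<lambda>t. corrector h M N c Y t p)"
  using has_real_derivative_corrector
  by (intro continuous_at_imp_continuous_on ballI DERIV_isCont) blast

lemma continuous_on_corrector_rate: "continuous_on S (\<lambda>t. corrector_rate h M N c Y t p)"
  by (cases p) (simp add: corrector_rate_def delay_def, intro continuous_intros)

lemma corrector_rate_interior: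
  assumes "2 \<le> i" "i \<le> M - 1" "1 \<le> j" "j \<le> N - 1" "h > 0"
  shows "corrector_rate h M N c Y t (i, j) = - Aop h l (corrector h M N c Y t) (i, j)"
proof -
  have "poly (corrector_row h M N c Y (i - 1) j) (delay c t)
      = h\<^sup>2 * poly (pderiv (corrector_row h M N c Y i j)) (delay c t)
        + 4 * poly (corrector_row h M N c Y i j) (delay c t)
        - poly (corrector_row h M N c Y (i + 1) j) (delay c t)
        - poly (corrector_row h M N c Y i (j + 1)) (delay c t)
        - poly (corrector_row h M N c Y i (j - 1)) (delay c t)"
    unfolding corrector_row_recurrence[OF assms(1-4)] by simp
  then show ?thesis using assms by (simp add: corrector_def corrector_rate_def Aop_def field_simps)
qed

lemma corrected_solution:
  assumes "h > 0" "is_sol h M N {0..} F u0 (\<lambda>j t. 0) u" "c \<ge> 0"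
    and "\<forall>j\<in>{1..N - 1}. \<forall>t\<in>{0..T}. Aop h (\<lambda>j. lam j t) (\<lambda>q. u t q + corrector h M N c Y t q) (1, j)
      = Aop h (\<lambda>j. 0) (u t) (1, j) - corrector_rate h M N c Y t (1, j)"
  shows "is_sol h M N {0..T} F u0 lam (\<lambda>t q. u t q + corrector h M N c Y t q)"
proof (rule is_sol_add[OF assms(2) corrector_in_F])
  show "corrector h M N c Y 0 = (\<lambda>p. 0)" using corrector_before_delay assms(3) by auto
  fix p and t :: real assume p: "interior_node M N p" and t: "t \<in> {0..T}"
  obtain i j where ij: "p = (i, j)" "1 \<le> i" "i \<le> M - 1" "1 \<le> j" "j \<le> N - 1"
    using p by (cases p) auto
  have "corrector_rate h M N c Y t p
      = Aop h (\<lambda>j. 0) (u t) p - Aop h (\<lambda>j. lam j t) (\<lambda>q. u t q + corrector h M N c Y t q) p"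
  proof (cases "i = 1")
    case True
    then show ?thesis using assms(4) ij t by simp
  next
    case False
    then show ?thesis
      using ij corrector_rate_interior[of i M j N h c Y t] assms(1)
        Aop_add_interior[OF False, of h "\<lambda>j. lam j t" "u t" "corrector h M N c Y t" j "\<lambda>j. 0"
          "\<lambda>j. lam j t"]
      by simp
  qed
  then show "((\<lambda>s. corrector h M N c Y s p) has_real_derivative
      Aop h (\<lambda>j. 0) (u t) p - Aop h (\<lambda>j. lam j t) (\<lambda>q. u t q + corrector h M N c Y t q) p)
      (at t within {0..T})"
    using has_real_derivative_corrector by (metis has_field_derivative_at_within)
qed

lemma corrector_bounded:
  assumes "finite I" "finite P"
  obtains B where "B \<ge> 0" "\<And>x p t. x \<in> I \<Longrightarrow> p \<in> P \<Longrightarrow> t \<in> {a..b} \<Longrightarrow>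
    \<bar>corrector h M N c (Y x) t p\<bar> \<le> B \<and> \<bar>corrector_rate h M N c (Y x) t p\<bar> \<le> B"
proof -
  define g where "g = (\<lambda>(x, p) t. \<bar>corrector h M N c (Y x) t p\<bar> + \<bar>corrector_rate h M N c (Y x) t p\<bar>)"
  have "continuous_on {a..b} (g xp)" for xp
    unfolding g_def by (cases xp) (simp, intro continuous_intros continuous_on_corrector
        continuous_on_corrector_rate)
  then obtain B where "B \<ge> 0" and B: "\<And>xp t. xp \<in> I \<times> P \<Longrightarrow> t \<in> {a..b} \<Longrightarrow> \<bar>g xp t\<bar> \<le> B"
    using continuous_on_compact_abs_bound[OF compact_Icc finite_cartesian_product[OF assms], where g = g]
    by blast
  show thesis
  proof (rule that[OF \<open>B \<ge> 0\<close>])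
    fix x p t assume "x \<in> I" "p \<in> P" "t \<in> {a..b}"
    then have "\<bar>corrector h M N c (Y x) t p\<bar> + \<bar>corrector_rate h M N c (Y x) t p\<bar> \<le> B"
      using B[of "(x, p)" t] by (simp add: g_def)
    then show "\<bar>corrector h M N c (Y x) t p\<bar> \<le> B \<and> \<bar>corrector_rate h M N c (Y x) t p\<bar> \<le> B"
      using abs_ge_zero[of "corrector h M N c (Y x) t p"] abs_ge_zero[of "corrector_rate h M N c (Y x) t p"]
      by linarith
  qed
qed

lemma corrector_unit_basis:
  assumes "h \<noteq> 0" "c > 0"
  obtains Y where "\<And>x p. interior_node M N x \<Longrightarrow> interior_node M N p \<Longrightarrow>
    corrector h M N c (Y x) (2 * c) p = (if p = x then 1 else 0)"
proof -
  have "\<exists>Y. \<forall>p. interior_node M N p \<longrightarrow> corrector h M N c Y (2 * c) p = (if p = x then 1 else 0)"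
    if "interior_node M N x" for x
  proof -
    obtain Y where Y: "\<forall>m<M - 1. \<forall>j. 1 \<le> j \<and> j \<le> N - 1 \<longrightarrow>
        poly (fst (sweep h N (top_row N M (M - 1) c Y) m) j) c = (if (M - 1 - m, j) = x then 1 else 0)"
      using sweep_values_surj[OF assms(1), of c "M - 1" "M - 1" N M
          "\<lambda>m j. if (M - 1 - m, j) = x then 1 else 0"] assms(2) by auto
    have "corrector h M N c Y (2 * c) p = (if p = x then 1 else 0)" if "interior_node M N p" for p
    proof -
      obtain i j where p: "p = (i, j)" by fastforce
      have "M - 1 - i < M - 1" "M - 1 - (M - 1 - i) = i" "delay c (2 * c) = c"
        using that assms(2) by (auto simp: p delay_def)
      then show ?thesis using Y that by (auto simp: p corrector_def corrector_row_def)
    qed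
    then show ?thesis by blast
  qed
  then have "\<forall>x. \<exists>Y. interior_node M N x \<longrightarrow>
      (\<forall>p. interior_node M N p \<longrightarrow> corrector h M N c Y (2 * c) p = (if p = x then 1 else 0))"
    by blast
  from choice[OF this] obtain Y where Y: "\<forall>x. interior_node M N x \<longrightarrow>
      (\<forall>p. interior_node M N p \<longrightarrow> corrector h M N c (Y x) (2 * c) p = (if p = x then 1 else 0))"
    by blast
  show thesis by (rule that) (use Y in blast)
qed

text \<open>The corrector is linear in its parameters, so combining correctors that reach the unit
  vectors yields small correctors for small targets.\<close>

lemma small_corrector:
  assumes "h \<noteq> 0" "c > 0" "\<eta> > 0"
  obtains \<epsilon> where "\<epsilon> > 0"
    "\<And>D. (\<And>p. interior_node M N p \<Longrightarrow> \<bar>D p\<bar> < \<epsilon>) \<Longrightarrow> \<exists>Y.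
       (\<forall>p. interior_node M N p \<longrightarrow> corrector h M N c Y (2 * c) p = D p) \<and>
       (\<forall>i\<in>{1,2}. \<forall>j\<le>N. \<forall>t\<in>{0..2 * c}.
          \<bar>corrector h M N c Y t (i, j)\<bar> \<le> \<eta> \<and> \<bar>corrector_rate h M N c Y t (i, j)\<bar> \<le> \<eta>)"
proof -
  define I where "I = {1..M - 1} \<times> {1..N - 1}"
  have "finite I" and I: "interior_node M N p \<longleftrightarrow> p \<in> I" for p
    by (auto simp: I_def interior_node_def mem_Times_iff)
  obtain Yb where "\<And>x p. interior_node M N x \<Longrightarrow> interior_node M N p \<Longrightarrow>
      corrector h M N c (Yb x) (2 * c) p = (if p = x then 1 else 0)"
    using corrector_unit_basis[OF assms(1,2), of M N] by blast
  then have Yb: "\<forall>x\<in>I. \<forall>p\<in>I. corrector h M N c (Yb x) (2 * c) p = (if p = x then 1 else 0)"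
    using I by blast
  obtain B where "B \<ge> 0" and B: "\<And>x p t. x \<in> I \<Longrightarrow> p \<in> {1,2} \<times> {..N} \<Longrightarrow> t \<in> {0..2 * c} \<Longrightarrow>
      \<bar>corrector h M N c (Yb x) t p\<bar> \<le> B \<and> \<bar>corrector_rate h M N c (Yb x) t p\<bar> \<le> B"
    using corrector_bounded[OF \<open>finite I\<close>, of "{1,2} \<times> {..N}"] by blast
  define \<epsilon> where "\<epsilon> = \<eta> / (real (card I) * B + 1)"
  have pos: "real (card I) * B + 1 > 0" using \<open>B \<ge> 0\<close> by (simp add: add_nonneg_pos)
  then have "\<epsilon> > 0" using assms(3) by (simp add: \<epsilon>_def)
  have "\<epsilon> * (real (card I) * B) \<le> \<epsilon> * (real (card I) * B + 1)" using \<open>\<epsilon> > 0\<close> by simp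
  also have "\<dots> = \<eta>" using pos by (simp add: \<epsilon>_def)
  finally have "\<epsilon> * (real (card I) * B) \<le> \<eta>" .
  show thesis
  proof (rule that[OF \<open>\<epsilon> > 0\<close>])
    fix D assume D: "\<And>p. interior_node M N p \<Longrightarrow> \<bar>D p\<bar> < \<epsilon>"
    define Y where "Y l j = (\<Sum>x\<in>I. D x * Yb x l j)" for l j
    have "corrector h M N c Y (2 * c) p = D p" if "p \<in> I" for p
    proof -
      have "corrector h M N c Y (2 * c) p = (\<Sum>x\<in>I. D x * (if p = x then 1 else 0))"
        unfolding Y_def corrector_sum[OF \<open>finite I\<close>] using that Yb by simp
      then show ?thesis using that \<open>finite I\<close> by (simp add: if_distrib cong: if_cong)
    qed
    moreover have "\<bar>corrector h M N c Y t (i, j)\<bar> \<le> \<eta> \<and> \<bar>corrector_rate h M N c Y t (i, j)\<bar> \<le> \<eta>"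
      if "i \<in> {1,2}" "j \<le> N" "t \<in> {0..2 * c}" for i j t
    proof -
      have small: "\<forall>x\<in>I. \<bar>D x\<bar> \<le> \<epsilon>" using D I by (simp add: less_imp_le)
      have "\<bar>corrector h M N c Y t (i, j)\<bar> \<le> \<epsilon> * (\<Sum>x\<in>I. B)"
        unfolding Y_def corrector_sum[OF \<open>finite I\<close>] using small B that by (intro abs_sum_mult_le) auto
      moreover have "\<bar>corrector_rate h M N c Y t (i, j)\<bar> \<le> \<epsilon> * (\<Sum>x\<in>I. B)"
        unfolding Y_def corrector_rate_sum[OF \<open>finite I\<close>] using small B that
        by (intro abs_sum_mult_le) auto
      ultimately show ?thesis using \<open>\<epsilon> * (real (card I) * B) \<le> \<eta>\<close> by simp
    qed
    ultimately show "\<exists>Y. (\<forall>p. interior_node M N p \<longrightarrow> corrector h M N c Y (2 * c) p = D p) \<and>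
       (\<forall>i\<in>{1,2}. \<forall>j\<le>N. \<forall>t\<in>{0..2 * c}.
          \<bar>corrector h M N c Y t (i, j)\<bar> \<le> \<eta> \<and> \<bar>corrector_rate h M N c Y t (i, j)\<bar> \<le> \<eta>)"
      using I by blast
  qed
qed

section \<open>The boundary coefficient\<close>

text \<open>The root, vanishing with \<open>r\<close>, of \<open>p \<lambda>\<^sup>2 + q \<lambda> + 2 r = 0\<close> in cancellation-free form, where
  \<open>p = 2 A - B + r\<close> and \<open>q = 4 A - B + 3 r\<close>. Clearing denominators shows that this quadratic is
  the boundary equation \<open>2 (1 + 1 / (1 + \<lambda>)) A - 2 / (2 + \<lambda>) B = r + 4 A - B\<close>.\<close>

definition boundary_coefficient :: "real \<Rightarrow> real \<Rightarrow> real \<Rightarrow> real" where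
  "boundary_coefficient A B r = (let p = 2 * A - B + r; q = 4 * A - B + 3 * r
     in - 4 * r * sgn q / (\<bar>q\<bar> + sqrt (q\<^sup>2 - 8 * p * r)))"

definition boundary_root_regular :: "real \<Rightarrow> real \<Rightarrow> real \<Rightarrow> bool" where
  "boundary_root_regular A B r \<longleftrightarrow>
     4 * A - B + 3 * r \<noteq> 0 \<and> 0 \<le> (4 * A - B + 3 * r)\<^sup>2 - 8 * (2 * A - B + r) * r"

lemma boundary_coefficient_eq:
  fixes A B r :: real
  defines "p \<equiv> 2 * A - B + r" and "q \<equiv> 4 * A - B + 3 * r" and "l \<equiv> boundary_coefficient A B r"
  assumes "boundary_root_regular A B r" "\<bar>l\<bar> < 1"
  shows "2 * (1 + 1 / (1 + l)) * A - 2 / (2 + l) * B = r + 4 * A - B"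
proof -
  have q: "q \<noteq> 0" "q\<^sup>2 - 8 * p * r \<ge> 0"
    using assms(4) by (simp_all add: boundary_root_regular_def p_def q_def)
  define d where "d = \<bar>q\<bar> + sqrt (q\<^sup>2 - 8 * p * r)"
  have d_pos: "d > 0" unfolding d_def using q by (simp add: add_pos_nonneg)
  have d_root: "d\<^sup>2 - 2 * \<bar>q\<bar> * d + 8 * p * r = 0"
    unfolding d_def using q(2) by (simp add: power2_eq_square algebra_simps)
  have ld: "l * d = - 4 * r * sgn q"
    using d_pos unfolding l_def boundary_coefficient_def p_def[symmetric] q_def[symmetric] d_def
    by (simp add: Let_def)
  have sgn: "sgn q * q = \<bar>q\<bar>" "(sgn q)\<^sup>2 = 1"
    using q(1) by (simp_all add: abs_sgn mult.commute power2_eq_square sgn_mult_self_eq)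
  have "(p * l\<^sup>2 + q * l + 2 * r) * d\<^sup>2 = p * (l * d)\<^sup>2 + q * (l * d) * d + 2 * r * d\<^sup>2"
    by (simp add: power2_eq_square algebra_simps)
  also have "\<dots> = 16 * p * r\<^sup>2 * (sgn q)\<^sup>2 - 4 * r * (sgn q * q) * d + 2 * r * d\<^sup>2"
    unfolding ld by (simp add: power2_eq_square algebra_simps)
  also have "\<dots> = 2 * r * (d\<^sup>2 - 2 * \<bar>q\<bar> * d + 8 * p * r)"
    unfolding sgn by (simp add: power2_eq_square algebra_simps)
  finally have quadratic: "p * l\<^sup>2 + q * l + 2 * r = 0" using d_root d_pos by simp
  have "1 + l \<noteq> 0" "2 + l \<noteq> 0" using assms(5) by auto
  then have "(2 * (1 + 1 / (1 + l)) * A - 2 / (2 + l) * B) * ((1 + l) * (2 + l))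
      = 2 * (2 + l) * (2 + l) * A - 2 * (1 + l) * B"
  proof -
    have "1 + 1 / (1 + l) = (2 + l) / (1 + l)" using \<open>1 + l \<noteq> 0\<close> by (simp add: field_simps)
    moreover have "2 * ((2 + l) / (1 + l)) * A * ((1 + l) * (2 + l)) = 2 * (2 + l) * (2 + l) * A"
      "2 / (2 + l) * B * ((1 + l) * (2 + l)) = 2 * (1 + l) * B"
      using \<open>1 + l \<noteq> 0\<close> \<open>2 + l \<noteq> 0\<close> by simp_all
    ultimately show ?thesis by (simp only: left_diff_distrib)
  qed
  also have "\<dots> = (r + 4 * A - B) * ((1 + l) * (2 + l))"
    using quadratic unfolding p_def q_def by (simp add: power2_eq_square algebra_simps)
  finally show ?thesis using \<open>1 + l \<noteq> 0\<close> \<open>2 + l \<noteq> 0\<close> by simp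
qed

lemma boundary_coefficient_small:
  assumes "m0 > 0" "U \<ge> 0" "Q > 0"
  obtains \<eta> where "\<eta> > 0" "\<And>a b w1 w2 r. m0 \<le> \<bar>(1/2) * b - 2 * a\<bar> \<Longrightarrow> \<bar>a\<bar> \<le> U \<Longrightarrow> \<bar>b\<bar> \<le> U \<Longrightarrow>
      \<bar>w1\<bar> \<le> \<eta> \<Longrightarrow> \<bar>w2\<bar> \<le> \<eta> \<Longrightarrow> \<bar>r\<bar> \<le> Q * \<eta> \<Longrightarrow>
      boundary_root_regular (a + w1) (b + w2) r \<and> \<bar>boundary_coefficient (a + w1) (b + w2) r\<bar> \<le> 1/4"
proof
  define P where "P = 3 * U + 3 + Q"
  define \<eta> where "\<eta> = min (min 1 (m0 / (5 + 3 * Q))) (min (m0\<^sup>2 / (16 * P * Q)) (m0 / (16 * Q)))"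
  have "P > 0" using assms unfolding P_def by simp
  then show "\<eta> > 0" using assms unfolding \<eta>_def by simp
  have \<eta>_le: "\<eta> \<le> 1" "\<eta> \<le> m0 / (5 + 3 * Q)" "\<eta> \<le> m0\<^sup>2 / (16 * P * Q)" "\<eta> \<le> m0 / (16 * Q)"
    unfolding \<eta>_def by auto
  have \<eta>: "0 \<le> \<eta>" "\<eta> \<le> 1" "(5 + 3 * Q) * \<eta> \<le> m0" "16 * P * Q * \<eta> \<le> m0\<^sup>2" "16 * Q * \<eta> \<le> m0"
    using \<open>\<eta> > 0\<close> \<eta>_le assms \<open>P > 0\<close> by (simp_all add: pos_le_divide_eq mult.commute)
  fix a b w1 w2 r
  assume nd: "m0 \<le> \<bar>(1/2) * b - 2 * a\<bar>" and ab: "\<bar>a\<bar> \<le> U" "\<bar>b\<bar> \<le> U"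
    and w: "\<bar>w1\<bar> \<le> \<eta>" "\<bar>w2\<bar> \<le> \<eta>" and r: "\<bar>r\<bar> \<le> Q * \<eta>"
  define A B where "A = a + w1" and "B = b + w2"
  define p q where "p = 2 * A - B + r" and "q = 4 * A - B + 3 * r"
  have "q = - 2 * ((1/2) * b - 2 * a) + (4 * w1 - w2 + 3 * r)" unfolding q_def A_def B_def by simp
  moreover have "\<bar>4 * w1 - w2 + 3 * r\<bar> \<le> (5 + 3 * Q) * \<eta>"
    using w r by (simp add: abs_le_iff algebra_simps)
  ultimately have q: "m0 \<le> \<bar>q\<bar>" using nd \<eta>(3) by (simp add: abs_le_iff) linarith
  have "Q * \<eta> \<le> Q" using \<eta>(2) assms(3) by (simp add: mult_left_le)
  then have "\<bar>p\<bar> \<le> P"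
    unfolding p_def A_def B_def P_def using ab w r \<eta>(2) by (auto simp: abs_le_iff)
  then have "\<bar>8 * p * r\<bar> \<le> 8 * P * (Q * \<eta>)" using r by (simp add: abs_mult mult_mono)
  then have pr: "\<bar>8 * p * r\<bar> \<le> m0\<^sup>2 / 2" using \<eta>(4) by (simp add: algebra_simps)
  have "m0\<^sup>2 \<le> q\<^sup>2" using q assms(1) by (metis abs_le_square_iff abs_of_pos)
  then have disc: "0 \<le> q\<^sup>2 - 8 * p * r" using pr assms(1) by (simp add: abs_le_iff)
  have den: "m0 \<le> \<bar>q\<bar> + sqrt (q\<^sup>2 - 8 * p * r)" using q real_sqrt_ge_zero[OF disc] by linarith
  have "\<bar>boundary_coefficient A B r\<bar> = 4 * \<bar>r\<bar> / (\<bar>q\<bar> + sqrt (q\<^sup>2 - 8 * p * r))"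
    using q den assms(1) by (cases "q = 0") (simp_all add: boundary_coefficient_def Let_def
        p_def[symmetric] q_def[symmetric] abs_mult)
  also have "\<dots> \<le> 4 * (Q * \<eta>) / m0"
    using den r assms(1) by (intro frac_le) auto
  also have "\<dots> \<le> 1/4" using \<eta>(5) assms(1) by (simp add: field_simps)
  finally have "\<bar>boundary_coefficient A B r\<bar> \<le> 1/4" .
  moreover have "boundary_root_regular A B r"
    unfolding boundary_root_regular_def q_def[symmetric] p_def[symmetric] using q disc assms(1) by simp
  ultimately show "boundary_root_regular (a + w1) (b + w2) r \<and>
      \<bar>boundary_coefficient (a + w1) (b + w2) r\<bar> \<le> 1/4"
    unfolding A_def B_def by blast
qed

lemma continuous_on_boundary_coefficient:
  fixes A B r :: "real \<Rightarrow> real"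
  defines "q \<equiv> \<lambda>t. 4 * A t - B t + 3 * r t" and "p \<equiv> \<lambda>t. 2 * A t - B t + r t"
  assumes "continuous_on S A" "continuous_on S B" "continuous_on S r"
    and "\<And>t. t \<in> S \<Longrightarrow> boundary_root_regular (A t) (B t) (r t)"
  shows "continuous_on S (\<lambda>t. boundary_coefficient (A t) (B t) (r t))"
proof -
  have regular: "\<forall>t\<in>S. q t \<noteq> 0 \<and> 0 \<le> (q t)\<^sup>2 - 8 * p t * r t"
    using assms(6) by (simp add: boundary_root_regular_def p_def q_def)
  then have "\<forall>t\<in>S. 0 < \<bar>q t\<bar> + sqrt ((q t)\<^sup>2 - 8 * p t * r t)"
    by (auto intro!: add_pos_nonneg)
  then have "\<forall>t\<in>S. \<bar>q t\<bar> + sqrt ((q t)\<^sup>2 - 8 * p t * r t) \<noteq> 0" by fastforce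
  then show ?thesis
    unfolding boundary_coefficient_def Let_def q_def[symmetric] p_def[symmetric]
    using regular unfolding p_def q_def by (intro continuous_intros assms(3-5)) auto
qed

definition uniformly_nondegenerate ::
  "nat \<Rightarrow> real set \<Rightarrow> real \<Rightarrow> real \<Rightarrow> (real \<Rightarrow> nat \<times> nat \<Rightarrow> real) \<Rightarrow> bool" where
  "uniformly_nondegenerate N S m0 U u \<longleftrightarrow> (\<forall>j\<in>{1..N - 1}. \<forall>t\<in>S.
     m0 \<le> \<bar>(1/2) * u t (2, j) - 2 * u t (1, j)\<bar> \<and> \<bar>u t (1, j)\<bar> \<le> U \<and> \<bar>u t (2, j)\<bar> \<le> U)"

lemma reference_bounds:
  fixes u :: "real \<Rightarrow> nat \<times> nat \<Rightarrow> real"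
  assumes "\<And>p. continuous_on {c..T} (\<lambda>t. u t p)"
    and "\<And>j t. j \<in> {1..N - 1} \<Longrightarrow> t \<in> {c..T} \<Longrightarrow> (1/2) * u t (2, j) - 2 * u t (1, j) \<noteq> 0"
  obtains m0 U where "m0 > 0" "U \<ge> 0" "uniformly_nondegenerate N {c..T} m0 U u"
proof -
  let ?g = "\<lambda>j t. \<bar>(1/2) * u t (2, j) - 2 * u t (1, j)\<bar>"
  have "continuous_on {c..T} (?g j)" for j by (intro continuous_intros assms(1))
  moreover have "?g j t > 0" if "j \<in> {1..N - 1}" "t \<in> {c..T}" for j t using assms(2)[OF that] by simp
  ultimately obtain m0 where "m0 > 0" and m0: "\<And>j t. j \<in> {1..N - 1} \<Longrightarrow> t \<in> {c..T} \<Longrightarrow> m0 \<le> ?g j t"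
    using continuous_on_compact_pos_bound[OF compact_Icc finite_atLeastAtMost, where g = ?g] by blast
  have "finite ({1, 2} \<times> {1..N - 1})" "\<And>p. p \<in> {1, 2} \<times> {1..N - 1} \<Longrightarrow> continuous_on {c..T} (\<lambda>t. u t p)"
    using assms(1) by simp_all
  then obtain U where "U \<ge> 0" and U: "\<And>p t. p \<in> {1, 2} \<times> {1..N - 1} \<Longrightarrow> t \<in> {c..T} \<Longrightarrow> \<bar>u t p\<bar> \<le> U"
    using continuous_on_compact_abs_bound[OF compact_Icc, where g = "\<lambda>p t. u t p"] by blast
  have "uniformly_nondegenerate N {c..T} m0 U u"
    unfolding uniformly_nondegenerate_def using m0 U by simp
  then show thesis using that \<open>m0 > 0\<close> \<open>U \<ge> 0\<close> by blast
qed

text \<open>What remains of the equation of row 1 for \<open>u + w\<close> once it is treated like an interior row.\<close>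

definition boundary_residual ::
  "real \<Rightarrow> (real \<Rightarrow> nat \<times> nat \<Rightarrow> real) \<Rightarrow> (real \<Rightarrow> nat \<times> nat \<Rightarrow> real) \<Rightarrow> nat \<Rightarrow> real \<Rightarrow> real" where
  "boundary_residual h w w' j t =
     w t (1, j + 1) + w t (1, j - 1) - h\<^sup>2 * w' t (1, j) - 4 * w t (1, j) + w t (2, j)"

text \<open>Up to time \<open>c\<close> the corrector vanishes, and the coefficient is frozen at its value at \<open>c\<close>,
  which is zero.\<close>

definition boundary_lambda :: "real \<Rightarrow> real \<Rightarrow> (real \<Rightarrow> nat \<times> nat \<Rightarrow> real) \<Rightarrow>
    (real \<Rightarrow> nat \<times> nat \<Rightarrow> real) \<Rightarrow> (real \<Rightarrow> nat \<times> nat \<Rightarrow> real) \<Rightarrow> nat \<Rightarrow> real \<Rightarrow> real" where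
  "boundary_lambda h c u w w' j t = (let s = max c t in boundary_coefficient
     (u s (1, j) + w s (1, j)) (u s (2, j) + w s (2, j)) (boundary_residual h w w' j s))"

lemma boundary_lambda_solves:
  assumes "h > 0" "c \<le> T"
    and cont: "\<And>p. continuous_on {c..T} (\<lambda>t. u t p)" "\<And>p. continuous_on {c..T} (\<lambda>t. w t p)"
      "\<And>p. continuous_on {c..T} (\<lambda>t. w' t p)"
    and early: "\<And>t p. t \<le> c \<Longrightarrow> w t p = 0 \<and> w' t p = 0"
    and root: "\<And>j t. j \<in> {1..N - 1} \<Longrightarrow> t \<in> {c..T} \<Longrightarrow>
      boundary_root_regular (u t (1, j) + w t (1, j)) (u t (2, j) + w t (2, j)) (boundary_residual h w w' j t) \<and>
      \<bar>boundary_coefficient (u t (1, j) + w t (1, j)) (u t (2, j) + w t (2, j))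
        (boundary_residual h w w' j t)\<bar> \<le> 1/4"
  defines "lam \<equiv> boundary_lambda h c u w w'"
  shows "admissible N T lam" "\<forall>j\<in>{1..N - 1}. \<forall>t\<in>{0..T}. \<bar>lam j t\<bar> \<le> 1/4"
    "\<forall>j\<in>{1..N - 1}. \<forall>t\<in>{0..T}.
       Aop h (\<lambda>j. lam j t) (\<lambda>q. u t q + w t q) (1, j) = Aop h (\<lambda>j. 0) (u t) (1, j) - w' t (1, j)"
proof -
  define A B r where "A j t = u t (1, j) + w t (1, j)" and "B j t = u t (2, j) + w t (2, j)"
    and "r = boundary_residual h w w'" for j t
  have lam: "lam j t = boundary_coefficient (A j (max c t)) (B j (max c t)) (r j (max c t))" for j t
    by (simp add: lam_def boundary_lambda_def A_def B_def r_def Let_def)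
  have max_in: "max c t \<in> {c..T}" if "t \<in> {0..T}" for t using that assms(2) by auto
  show small: "\<forall>j\<in>{1..N - 1}. \<forall>t\<in>{0..T}. \<bar>lam j t\<bar> \<le> 1/4"
    using root max_in unfolding lam A_def B_def r_def by blast
  have "continuous_on {0..T} (lam j)" if "j \<in> {1..N - 1}" for j
  proof -
    have "continuous_on {c..T} (A j)" "continuous_on {c..T} (B j)" "continuous_on {c..T} (r j)"
      unfolding A_def B_def r_def boundary_residual_def by (intro continuous_intros cont)+
    moreover have "boundary_root_regular (A j t) (B j t) (r j t)" if "t \<in> {c..T}" for t
      using root[OF \<open>j \<in> {1..N - 1}\<close> that] by (simp add: A_def B_def r_def)
    ultimately have "continuous_on {c..T} (\<lambda>t. boundary_coefficient (A j t) (B j t) (r j t))"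
      by (rule continuous_on_boundary_coefficient)
    then show ?thesis unfolding lam
      by (rule continuous_on_compose2[of _ _ _ "\<lambda>t. max c t"]) (use max_in in \<open>auto intro!: continuous_intros\<close>)
  qed
  then show "admissible N T lam"
    unfolding admissible_def using small by (intro conjI exI[of _ "1/4"]) auto
  show "\<forall>j\<in>{1..N - 1}. \<forall>t\<in>{0..T}.
      Aop h (\<lambda>j. lam j t) (\<lambda>q. u t q + w t q) (1, j) = Aop h (\<lambda>j. 0) (u t) (1, j) - w' t (1, j)"
  proof (intro ballI)
    fix j t assume j: "j \<in> {1..N - 1}" and t: "t \<in> {0..T}"
    have "2 * (1 + 1 / (1 + lam j t)) * (u t (1, j) + w t (1, j)) - 2 / (2 + lam j t) * (u t (2, j) + w t (2, j))
      = boundary_residual h w w' j t + 4 * (u t (1, j) + w t (1, j)) - (u t (2, j) + w t (2, j))"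
    proof (cases "t \<le> c")
      case True
      then have "r j t = 0" "r j c = 0" using early by (auto simp: r_def boundary_residual_def)
      moreover have "lam j t = 0" using True \<open>r j c = 0\<close> by (simp add: lam boundary_coefficient_def)
      ultimately show ?thesis by (simp add: r_def)
    next
      case False
      then have "lam j t = boundary_coefficient (A j t) (B j t) (r j t)" "t \<in> {c..T}" using t by (auto simp: lam)
      then show ?thesis
        using root[OF j \<open>t \<in> {c..T}\<close>] boundary_coefficient_eq[of "A j t" "B j t" "r j t"]
        unfolding A_def B_def r_def by auto
    qed
    then show "Aop h (\<lambda>j. lam j t) (\<lambda>q. u t q + w t q) (1, j) = Aop h (\<lambda>j. 0) (u t) (1, j) - w' t (1, j)"
      by (rule Aop_boundary_row[OF assms(1) _ boundary_residual_def])
  qed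
qed

lemma boundary_control:
  assumes "h > 0" "c \<le> T" "m0 > 0" "U \<ge> 0"
  obtains \<eta> where "\<eta> > 0"
    "\<And>u w w'. uniformly_nondegenerate N {c..T} m0 U u \<Longrightarrow>
      (\<And>i j t. i \<in> {1, 2} \<Longrightarrow> j \<le> N \<Longrightarrow> t \<in> {c..T} \<Longrightarrow> \<bar>w t (i, j)\<bar> \<le> \<eta> \<and> \<bar>w' t (i, j)\<bar> \<le> \<eta>) \<Longrightarrow>
      (\<And>p. continuous_on {c..T} (\<lambda>t. u t p)) \<Longrightarrow> (\<And>p. continuous_on {c..T} (\<lambda>t. w t p)) \<Longrightarrow>
      (\<And>p. continuous_on {c..T} (\<lambda>t. w' t p)) \<Longrightarrow>
      (\<And>t p. t \<le> c \<Longrightarrow> w t p = 0 \<and> w' t p = 0) \<Longrightarrow>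
      \<exists>lam. admissible N T lam \<and> (\<forall>j\<in>{1..N - 1}. \<forall>t\<in>{0..T}. \<bar>lam j t\<bar> \<le> 1/4) \<and>
        (\<forall>j\<in>{1..N - 1}. \<forall>t\<in>{0..T}. Aop h (\<lambda>j. lam j t) (\<lambda>q. u t q + w t q) (1, j)
           = Aop h (\<lambda>j. 0) (u t) (1, j) - w' t (1, j))"
proof -
  have "7 + h\<^sup>2 > 0" by (simp add: add_pos_nonneg)
  obtain \<eta> where "\<eta> > 0" and \<eta>: "\<And>a b w1 w2 r. m0 \<le> \<bar>(1/2) * b - 2 * a\<bar> \<Longrightarrow> \<bar>a\<bar> \<le> U \<Longrightarrow>
      \<bar>b\<bar> \<le> U \<Longrightarrow> \<bar>w1\<bar> \<le> \<eta> \<Longrightarrow> \<bar>w2\<bar> \<le> \<eta> \<Longrightarrow> \<bar>r\<bar> \<le> (7 + h\<^sup>2) * \<eta> \<Longrightarrow>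
      boundary_root_regular (a + w1) (b + w2) r \<and> \<bar>boundary_coefficient (a + w1) (b + w2) r\<bar> \<le> 1/4"
    using boundary_coefficient_small[OF assms(3,4) \<open>7 + h\<^sup>2 > 0\<close>] by blast
  show thesis
  proof (rule that[OF \<open>\<eta> > 0\<close>])
    fix u w w' :: "real \<Rightarrow> nat \<times> nat \<Rightarrow> real"
    assume nondeg: "uniformly_nondegenerate N {c..T} m0 U u"
      and w: "\<And>i j t. i \<in> {1, 2} \<Longrightarrow> j \<le> N \<Longrightarrow> t \<in> {c..T} \<Longrightarrow> \<bar>w t (i, j)\<bar> \<le> \<eta> \<and> \<bar>w' t (i, j)\<bar> \<le> \<eta>"
      and cont: "\<And>p. continuous_on {c..T} (\<lambda>t. u t p)" "\<And>p. continuous_on {c..T} (\<lambda>t. w t p)"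
        "\<And>p. continuous_on {c..T} (\<lambda>t. w' t p)"
      and early: "\<And>t p. t \<le> c \<Longrightarrow> w t p = 0 \<and> w' t p = 0"
    have "boundary_root_regular (u t (1, j) + w t (1, j)) (u t (2, j) + w t (2, j)) (boundary_residual h w w' j t) \<and>
      \<bar>boundary_coefficient (u t (1, j) + w t (1, j)) (u t (2, j) + w t (2, j))
        (boundary_residual h w w' j t)\<bar> \<le> 1/4"
      if "j \<in> {1..N - 1}" "t \<in> {c..T}" for j t
    proof (rule \<eta>)
      have "j - 1 \<le> N" "j \<le> N" "j + 1 \<le> N" using that by auto
      then have "\<bar>h\<^sup>2 * w' t (1, j)\<bar> \<le> h\<^sup>2 * \<eta>"
        using w[of 1 j t] that by (simp add: abs_mult mult_left_mono)
      then show "\<bar>boundary_residual h w w' j t\<bar> \<le> (7 + h\<^sup>2) * \<eta>"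
        using w[of 1 "j + 1" t] w[of 1 "j - 1" t] w[of 1 j t] w[of 2 j t] that
          \<open>j - 1 \<le> N\<close> \<open>j + 1 \<le> N\<close> \<open>j \<le> N\<close>
        unfolding boundary_residual_def abs_le_iff by (simp add: algebra_simps)
    qed (use nondeg that w[of 1 j t] w[of 2 j t] in \<open>auto simp: uniformly_nondegenerate_def\<close>)
    then show "\<exists>lam. admissible N T lam \<and> (\<forall>j\<in>{1..N - 1}. \<forall>t\<in>{0..T}. \<bar>lam j t\<bar> \<le> 1/4) \<and>
        (\<forall>j\<in>{1..N - 1}. \<forall>t\<in>{0..T}. Aop h (\<lambda>j. lam j t) (\<lambda>q. u t q + w t q) (1, j)
           = Aop h (\<lambda>j. 0) (u t) (1, j) - w' t (1, j))"
      using boundary_lambda_solves[of h c T u w w' N, OF assms(1,2) cont early] by blast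
  qed
qed

section \<open>Local exact controllability\<close>

lemma corrector_control:
  assumes "h > 0" "c > 0" "T = 2 * c" "\<And>p. continuous_on {c..T} (\<lambda>t. u t p)"
    and "m0 > 0" "U \<ge> 0" "uniformly_nondegenerate N {c..T} m0 U u"
  obtains \<epsilon> where "\<epsilon> > 0" "\<And>D. (\<And>p. interior_node M N p \<Longrightarrow> \<bar>D p\<bar> < \<epsilon>) \<Longrightarrow> \<exists>Y lam.
    admissible N T lam \<and> (\<forall>j\<in>{1..N - 1}. \<forall>t\<in>{0..T}. \<bar>lam j t\<bar> \<le> 1/4) \<and>
    (\<forall>j\<in>{1..N - 1}. \<forall>t\<in>{0..T}. Aop h (\<lambda>j. lam j t) (\<lambda>q. u t q + corrector h M N c Y t q) (1, j)
       = Aop h (\<lambda>j. 0) (u t) (1, j) - corrector_rate h M N c Y t (1, j)) \<and>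
    (\<forall>p. interior_node M N p \<longrightarrow> corrector h M N c Y T p = D p)"
proof -
  have "c \<le> T" "h \<noteq> 0" using assms(1-3) by simp_all
  show thesis
  proof (cases rule: boundary_control[OF \<open>h > 0\<close> \<open>c \<le> T\<close> \<open>m0 > 0\<close> \<open>U \<ge> 0\<close>, of N])
    case (1 \<eta>)
    note control = 1(2)
    show thesis
    proof (cases rule: small_corrector[OF \<open>h \<noteq> 0\<close> \<open>c > 0\<close> \<open>\<eta> > 0\<close>, of M N])
      case (1 \<epsilon>)
      show thesis
      proof (rule that[OF \<open>\<epsilon> > 0\<close>])
        fix D assume "\<And>p. interior_node M N p \<Longrightarrow> \<bar>D p\<bar> < \<epsilon>"
        from 1(2)[of D, OF this] obtain Y
          where Y_end: "\<forall>p. interior_node M N p \<longrightarrow> corrector h M N c Y T p = D p"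
          and Y_small: "\<forall>i\<in>{1,2}. \<forall>j\<le>N. \<forall>t\<in>{0..T}.
            \<bar>corrector h M N c Y t (i, j)\<bar> \<le> \<eta> \<and> \<bar>corrector_rate h M N c Y t (i, j)\<bar> \<le> \<eta>"
          unfolding \<open>T = 2 * c\<close> by blast
        have "\<bar>corrector h M N c Y t (i, j)\<bar> \<le> \<eta> \<and> \<bar>corrector_rate h M N c Y t (i, j)\<bar> \<le> \<eta>"
          if "i \<in> {1,2}" "j \<le> N" "t \<in> {c..T}" for i j t
          using Y_small that \<open>c > 0\<close> by auto
        moreover have "corrector h M N c Y t p = 0 \<and> corrector_rate h M N c Y t p = 0"
          if "t \<le> c" for t p
          using corrector_before_delay[OF that] by blast
        ultimately show "\<exists>Y lam. admissible N T lam \<and> (\<forall>j\<in>{1..N - 1}. \<forall>t\<in>{0..T}. \<bar>lam j t\<bar> \<le> 1/4) \<and>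
          (\<forall>j\<in>{1..N - 1}. \<forall>t\<in>{0..T}. Aop h (\<lambda>j. lam j t) (\<lambda>q. u t q + corrector h M N c Y t q) (1, j)
             = Aop h (\<lambda>j. 0) (u t) (1, j) - corrector_rate h M N c Y t (1, j)) \<and>
          (\<forall>p. interior_node M N p \<longrightarrow> corrector h M N c Y T p = D p)"
          using control[of u "corrector h M N c Y" "corrector_rate h M N c Y", OF assms(7) _ assms(4)
              continuous_on_corrector continuous_on_corrector_rate] Y_end
          by blast
      qed
    qed
  qed
qed

lemma reach_near_reference:
  assumes "h > 0" "c > 0" "T = 2 * c" and ref: "is_sol h M N {0..} F u0 (\<lambda>j t. 0) u"
    and "m0 > 0" "U \<ge> 0" "uniformly_nondegenerate N {c..T} m0 U u"
  obtains \<epsilon> where "\<epsilon> > 0" "\<forall>Z. in_F M N Z \<and> (\<forall>p. interior_node M N p \<longrightarrow> \<bar>Z p - u T p\<bar> < \<epsilon>) \<longrightarrow>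
    (\<exists>lam. admissible N T lam \<and> (\<forall>j\<in>{1..N-1}. \<forall>t\<in>{0..T}. \<bar>lam j t\<bar> < 1/2) \<and>
      (\<exists>v. is_sol h M N {0..T} F u0 lam v) \<and> (\<forall>v. is_sol h M N {0..T} F u0 lam v \<longrightarrow> v T = Z))"
proof -
  have u_cont: "continuous_on {c..T} (\<lambda>t. u t p)" for p
    using is_sol_continuous_on[OF ref] by (rule continuous_on_subset) (use \<open>c > 0\<close> in auto)
  show thesis
  proof (cases rule: corrector_control[OF assms(1-3) u_cont assms(5-7), of M])
    case (1 \<epsilon>)
    show thesis
    proof (rule that[OF \<open>\<epsilon> > 0\<close>], intro allI impI)
      fix Z assume Z: "in_F M N Z \<and> (\<forall>p. interior_node M N p \<longrightarrow> \<bar>Z p - u T p\<bar> < \<epsilon>)"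
      then obtain Y lam where lam: "admissible N T lam" "\<forall>j\<in>{1..N - 1}. \<forall>t\<in>{0..T}. \<bar>lam j t\<bar> \<le> 1/4"
        "\<forall>j\<in>{1..N - 1}. \<forall>t\<in>{0..T}. Aop h (\<lambda>j. lam j t) (\<lambda>q. u t q + corrector h M N c Y t q) (1, j)
           = Aop h (\<lambda>j. 0) (u t) (1, j) - corrector_rate h M N c Y t (1, j)"
        and Y_end: "\<forall>p. interior_node M N p \<longrightarrow> corrector h M N c Y T p = Z p - u T p"
        using 1(2)[of "\<lambda>p. Z p - u T p"] by blast
      define v where "v t q = u t q + corrector h M N c Y t q" for t q
      have sol: "is_sol h M N {0..T} F u0 lam v"
        unfolding v_def by (rule corrected_solution[OF \<open>h > 0\<close> ref less_imp_le[OF \<open>c > 0\<close>] lam(3)])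
      have "v T p = Z p" for p
      proof (cases "interior_node M N p")
        case False
        have "in_F M N (u T)" using is_solD(2)[OF ref, of T] assms(2,3) by simp
        then have "u T p = 0" "Z p = 0" "corrector h M N c Y T p = 0"
          using Z in_F_outside[OF _ False] corrector_in_F by blast+
        then show ?thesis by (simp add: v_def)
      next
        case True
        then have "corrector h M N c Y T p = Z p - u T p" using Y_end by blast
        then show ?thesis by (simp add: v_def)
      qed
      then have "v' T = Z" if "is_sol h M N {0..T} F u0 lam v'" for v'
        using is_sol_unique_at[OF \<open>h > 0\<close> _ lam(2) sol that] assms(2,3) by auto
      moreover have "\<bar>lam j t\<bar> < 1/2" if "j \<in> {1..N-1}" "t \<in> {0..T}" for j t
        using lam(2) that by fastforce
      ultimately show "\<exists>lam. admissible N T lam \<and> (\<forall>j\<in>{1..N-1}. \<forall>t\<in>{0..T}. \<bar>lam j t\<bar> < 1/2) \<and>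
        (\<exists>v. is_sol h M N {0..T} F u0 lam v) \<and> (\<forall>v. is_sol h M N {0..T} F u0 lam v \<longrightarrow> v T = Z)"
        using lam(1) sol by blast
    qed
  qed
qed

theorem theorem2p23:
  fixes h T :: real and M N :: nat
    and F :: "real \<Rightarrow> nat \<times> nat \<Rightarrow> real" and u0 :: "nat \<times> nat \<Rightarrow> real"
    and u :: "real \<Rightarrow> nat \<times> nat \<Rightarrow> real"
  assumes "h > 0" and "M \<ge> 2" and "N \<ge> 2" and "T > 0"
    and "in_F M N u0"
    and "\<forall>t\<ge>0. in_F M N (F t)"
    and "\<forall>p. continuous_on {0..} (\<lambda>t. F t p)"
    and ref: "is_sol h M N {0..} F u0 (\<lambda>j t. 0) u"
    and nondeg: "\<forall>t>0. \<forall>j\<in>{1..N-1}. (1/2) * u t (2, j) - 2 * u t (1, j) \<noteq> 0"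
  shows "\<exists>\<delta>>0. \<exists>\<epsilon>>0. \<forall>Z. in_F M N Z \<and>
           (\<forall>p. interior_node M N p \<longrightarrow> \<bar>Z p - u T p\<bar> < \<epsilon>) \<longrightarrow>
           (\<exists>lam. admissible N T lam \<and>
              (\<forall>j\<in>{1..N-1}. \<forall>t\<in>{0..T}. \<bar>lam j t\<bar> < \<delta>) \<and>
              (\<exists>v. is_sol h M N {0..T} F u0 lam v) \<and>
              (\<forall>v. is_sol h M N {0..T} F u0 lam v \<longrightarrow> v T = Z))"
proof -
  define c where "c = T / 2"
  have c: "c > 0" "T = 2 * c" using \<open>T > 0\<close> by (auto simp: c_def)
  have u_cont: "continuous_on {c..T} (\<lambda>t. u t p)" for p
    using is_sol_continuous_on[OF ref] by (rule continuous_on_subset) (use c in auto)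
  have "(1/2) * u t (2, j) - 2 * u t (1, j) \<noteq> 0" if "j \<in> {1..N - 1}" "t \<in> {c..T}" for j t
    using nondeg that c(1) by simp
  then obtain m0 U where bounds: "m0 > 0" "U \<ge> 0" "uniformly_nondegenerate N {c..T} m0 U u"
    using reference_bounds[where u = u and c = c and T = T and N = N, OF u_cont] by blast
  show ?thesis
  proof (cases rule: reach_near_reference[OF \<open>h > 0\<close> c ref bounds])
    case (1 \<epsilon>)
    have "(1/2 :: real) > 0" by simp
    then show ?thesis using 1 by blast
  qed
qed

end
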